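(* Let $n\ge2$, $1<p<\infty$, $R>0$, $\bar\beta>0$ a constant, and let $\rho$ and $f$ be as in the context. Then the function $$g(z)=f(z^{1/n})\,z^{1-\frac1n},\qquad 0\le z\le R^n,$$ is convex on $[0,R^n]$.
   Context: $F:\mathbb R^n\to[0,\infty)$ is convex, even, positively 1-homogeneous, with $a|\xi|\le F(\xi)\le b|\xi|$ ($0<a\le b$), $F\in C^2(\mathbb R^n\setminus\{0\})$, Hessian of $F^p$ positive definite off the origin; $F^o(v)=\sup_{\xi\ne0}\langle\xi,v\rangle/F(\xi)$ and $\mathcal W_R=\{x:F^o(x)<R\}$. $\ell_1(\bar\beta,\mathcal W_R)=\inf_{v\in W^{1,p}(\mathcal W_R),v\not\equiv0}\frac{\int_{\mathcal W_R}F^p(\nabla v)dx+\bar\beta\int_{\partial\mathcal W_R}|v|^pF(\nu)d\mathcal H^{n-1}}{\int_{\mathcal W_R}|v|^pdx}$ ($\nu$ the Euclidean outer normal). It is known that the positive first eigenfunction on $\mathcal W_R$ has the form $v(x)=\rho(F^o(x))$, where $\rho\in C^\infty(]0,R[)\cap C^1([0,R])$ is positive, decreasing, and solves $-(p-1)(-\rho'(r))^{p-2}\rho''(r)+\frac{n-1}{r}(-\rho'(r))^{p-1}=\ell_1(\bar\beta,\mathcal W_R)\rho(r)^{p-1}$ for $r\in]0,R[$, $\rho'(0)=0$, $-(-\rho'(R))^{p-1}+\bar\beta\rho(R)^{p-1}=0$. Define $f(r)=\dfrac{(-\rho'(r))^{p-1}}{\rho(r)^{p-1}}$ for $r\in[0,R]$.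 *)

theory Defs
  imports "HOL-Analysis.Analysis"
begin

definition fratio :: "real \<Rightarrow> (real \<Rightarrow> real) \<Rightarrow> (real \<Rightarrow> real) \<Rightarrow> real \<Rightarrow> real" where
  "fratio p \<rho> \<rho>' r = (- \<rho>' r) powr (p - 1) / (\<rho> r) powr (p - 1)"

end

theory Submission
  imports Defs
begin

(* In terms of u = - rho' / rho one has f = u^(p-1), and the ODE becomes the Riccati-type equation
   (p - 1) u^(p-2) u' = lam - (n - 1)/r u^(p-1) + (p - 1) u^p.
   In the variable z = r^n the function g has derivative (lam + (p - 1) u(z^(1/n))^p) / n, so g is
   convex as soon as u is nondecreasing. If u' were negative at some r, the maximum of u on [0, r]
   would be attained at an interior critical point r1, where the right-hand side vanishes and has
   derivative (n - 1)/r1^2 u^(p-1) > 0; hence u' > 0 just right of r1, contradicting maximality.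
   Positivity of u on (0, R] needs lam /= 0: for lam = 0 the flux (- rho')^(p-1) would be
   nonincreasing to the right of the last zero of rho', contradicting the Robin condition at R. *)

lemma convex_on_Icc_if_convex_on_interior:
  fixes f :: "real \<Rightarrow> real"
  assumes convex: "convex_on {a<..<b} f" and cont: "continuous_on {a..b} f"
  shows "convex_on {a..b} f"
proof (cases "a < b")
  case False
  show ?thesis
  proof (rule convex_onI)
    fix t x y :: real
    assume "x \<in> {a..b}" "y \<in> {a..b}"
    with False have "y = x" by auto
    then show "f ((1 - t) *\<^sub>R x + t *\<^sub>R y) \<le> (1 - t) * f x + t * f y"
      by (simp add: algebra_simps)
  qed simp
next
  case True
  define c where "c = (a + b) / 2"
  define shift where "shift = (\<lambda>x s. (1 - s) * x + s * c)"
  \<comment> \<open>Push both points towards the midpoint, use convexity inside, and let the push vanish.\<close>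
  have shift_in: "shift x s \<in> {a<..<b}" if "x \<in> {a..b}" "0 < s" "s \<le> 1" for x s
  proof -
    have "(1 - s) * a \<le> (1 - s) * x" "(1 - s) * x \<le> (1 - s) * b"
      using that by (simp_all add: mult_left_mono)
    moreover have "s * a < s * c" "s * c < s * b"
      using that True by (simp_all add: c_def)
    ultimately show ?thesis by (auto simp: shift_def algebra_simps)
  qed
  have near_0: "\<forall>\<^sub>F s in at_right 0. s \<in> {0<..<1::real}"
    by (rule eventually_at_right_real) simp
  have shift_lim: "((\<lambda>s. f (shift x s)) \<longlongrightarrow> f x) (at_right 0)" if "x \<in> {a..b}" for x
  proof (rule continuous_on_tendsto_compose[OF cont _ that])
    have "((\<lambda>s. shift x s) \<longlongrightarrow> shift x 0) (at_right 0)"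
      unfolding shift_def by (intro tendsto_intros)
    then show "((\<lambda>s. shift x s) \<longlongrightarrow> x) (at_right 0)" by (simp add: shift_def)
    show "\<forall>\<^sub>F s in at_right 0. shift x s \<in> {a..b}"
      using near_0 by eventually_elim (use shift_in[OF that] in fastforce)
  qed
  show ?thesis
  proof (rule convex_onI)
    show "convex {a..b}" by simp
    fix t x y :: real
    assume t: "0 < t" "t < 1" and xy: "x \<in> {a..b}" "y \<in> {a..b}"
    have comb: "(1 - t) * shift x s + t * shift y s = shift ((1 - t) * x + t * y) s" for s
      by (simp add: shift_def algebra_simps)
    have xy_in: "(1 - t) * x + t * y \<in> {a..b}"
      using convexD[OF convex_real_interval(5) xy, of "1 - t" t] t by (simp add: algebra_simps)
    have "f ((1 - t) * x + t * y) \<le> (1 - t) * f x + t * f y"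
    proof (rule tendsto_le[OF trivial_limit_at_right_real])
      show "((\<lambda>s. (1 - t) * f (shift x s) + t * f (shift y s)) \<longlongrightarrow> (1 - t) * f x + t * f y) (at_right 0)"
        by (intro tendsto_intros shift_lim xy)
      show "((\<lambda>s. f (shift ((1 - t) * x + t * y) s)) \<longlongrightarrow> f ((1 - t) * x + t * y)) (at_right 0)"
        by (rule shift_lim[OF xy_in])
      show "\<forall>\<^sub>F s in at_right 0. f (shift ((1 - t) * x + t * y) s) \<le> (1 - t) * f (shift x s) + t * f (shift y s)"
        using near_0
      proof eventually_elim
        case (elim s)
        then show ?case
          using convex_onD[OF convex, of t "shift x s" "shift y s"] shift_in xy t comb[of s]
          by simp
      qed
    qed
    then show "f ((1 - t) *\<^sub>R x + t *\<^sub>R y) \<le> (1 - t) * f x + t * f y" by simp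
  qed
qed

lemma has_real_derivative_nonpos_if_antimono_on:
  fixes f :: "real \<Rightarrow> real"
  assumes "a < b" and x: "x \<in> {a..b}"
    and deriv: "(f has_real_derivative D) (at x within {a..b})"
    and antimono: "\<And>y z. y \<in> {a..b} \<Longrightarrow> z \<in> {a..b} \<Longrightarrow> y \<le> z \<Longrightarrow> f z \<le> f y"
  shows "D \<le> 0"
proof (rule tendsto_upperbound)
  show "((\<lambda>y. (f y - f x) / (y - x)) \<longlongrightarrow> D) (at x within {a..b})"
    using deriv by (simp add: has_field_derivative_iff)
  show "\<forall>\<^sub>F y in at x within {a..b}. (f y - f x) / (y - x) \<le> 0"
    unfolding eventually_at_filter
  proof (intro always_eventually allI impI)
    fix y assume "y \<noteq> x" "y \<in> {a..b}"
    then show "(f y - f x) / (y - x) \<le> 0"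
      using antimono[of x y] antimono[of y x] x
      by (cases "x < y") (auto simp: divide_nonpos_pos divide_nonneg_neg)
  qed
  show "at x within {a..b} \<noteq> bot"
    using \<open>a < b\<close> x by (simp add: trivial_limit_within)
qed

lemma riccati_identity_powr:
  fixes a b c p lam N :: real
  assumes a: "a > 0" and b: "b > 0"
    and ode: "- (p - 1) * a powr (p - 2) * c + N * a powr (p - 1) = lam * b powr (p - 1)"
  shows "(p - 1) * (a / b) powr (p - 2) * (- c / b + (a / b)\<^sup>2)
           = lam - N * (a / b) powr (p - 1) + (p - 1) * (a / b) powr p"
proof -
  define A B where "A = a powr (p - 2)" and "B = b powr (p - 2)"
  have B: "B > 0" using b by (simp add: B_def)
  have powr_shift: "x powr (p - 1) = x powr (p - 2) * x" "x powr p = x powr (p - 2) * x\<^sup>2"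
    if "x > 0" for x :: real
  proof -
    show "x powr (p - 1) = x powr (p - 2) * x"
      using powr_add[of x "p - 2" 1] that by simp
    show "x powr p = x powr (p - 2) * x\<^sup>2"
      using powr_add[of x "p - 2" 2] that by (simp add: powr_numeral)
  qed
  have lam: "lam = (- (p - 1) * A * c + N * A * a) / (B * b)"
    using ode B b powr_shift(1)[OF a] powr_shift(1)[OF b] by (simp add: A_def B_def field_simps)
  have "(p - 1) * (A / B) * (- c / b + (a / b)\<^sup>2)
      = lam - N * (A * a / (B * b)) + (p - 1) * (A * a\<^sup>2 / (B * b\<^sup>2))"
    unfolding lam using B b by (simp add: field_simps power2_eq_square)
  then show ?thesis
    using powr_shift[OF a] powr_shift[OF b] by (simp add: powr_divide A_def B_def)
qed

locale riccati_profile =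
  fixes n :: nat and p lam R :: real and u u' :: "real \<Rightarrow> real"
  assumes n_ge_2: "n \<ge> 2" and p_gt_1: "p > 1"
    and R_pos: "R > 0"
    and u_cont: "continuous_on {0..R} u"
    and u_0: "u 0 = 0"
    and u_pos: "\<And>r. r \<in> {0<..<R} \<Longrightarrow> u r > 0"
    and u_deriv: "\<And>r. r \<in> {0<..<R} \<Longrightarrow> (u has_real_derivative u' r) (at r)"
    and riccati: "\<And>r. r \<in> {0<..<R} \<Longrightarrow>
      (p - 1) * u r powr (p - 2) * u' r = lam - (real n - 1) / r * u r powr (p - 1) + (p - 1) * u r powr p"
begin

lemma u'_pos_iff:
  assumes "r \<in> {0<..<R}"
  shows "u' r > 0 \<longleftrightarrow> lam - (real n - 1) / r * u r powr (p - 1) + (p - 1) * u r powr p > 0"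
proof -
  have "(p - 1) * u r powr (p - 2) > 0"
    using u_pos[OF assms] p_gt_1 by simp
  then show ?thesis
    unfolding riccati[OF assms, symmetric] by (metis mult_pos_pos zero_less_mult_pos)
qed

lemma u'_pos_right_of_critical_point:
  assumes r: "r \<in> {0<..<R}" and crit: "u' r = 0"
  obtains d where "d > 0" "\<And>y. r < y \<Longrightarrow> y < r + d \<Longrightarrow> u' y > 0"
proof -
  define G where "G y = lam - (real n - 1) / y * u y powr (p - 1) + (p - 1) * u y powr p" for y
  \<comment> \<open>At a critical point only the explicit dependence of G on r survives differentiation.\<close>
  have "(G has_real_derivative (real n - 1) / r\<^sup>2 * u r powr (p - 1)) (at r)"
    unfolding G_def using u_pos[OF r] r crit
    by (auto intro!: derivative_eq_intros u_deriv[OF r] simp: power2_eq_square)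
  moreover have "(real n - 1) / r\<^sup>2 * u r powr (p - 1) > 0"
    using n_ge_2 u_pos[OF r] r by simp
  ultimately obtain d where d: "d > 0" "\<And>h. h > 0 \<Longrightarrow> h < d \<Longrightarrow> G r < G (r + h)"
    using DERIV_pos_inc_right by blast
  have "G r = 0"
    using riccati[OF r] crit by (simp add: G_def)
  show ?thesis
  proof
    show "min d (R - r) > 0" using d r by simp
    fix y assume y: "r < y" "y < r + min d (R - r)"
    then have "G r < G y"
      using d(2)[of "y - r"] by simp
    moreover have "y \<in> {0<..<R}"
      using y r by auto
    ultimately show "u' y > 0"
      using u'_pos_iff \<open>G r = 0\<close> by (simp add: G_def)
  qed
qed

lemma u'_nonneg:
  assumes r: "r \<in> {0<..<R}"
  shows "u' r \<ge> 0"
proof (rule ccontr)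
  assume "\<not> u' r \<ge> 0"
  then obtain d where d: "d > 0" "\<And>h. h > 0 \<Longrightarrow> h < d \<Longrightarrow> u r < u (r - h)"
    using DERIV_neg_dec_left[OF u_deriv[OF r]] by force
  have "\<exists>r1\<in>{0..r}. \<forall>y\<in>{0..r}. u y \<le> u r1"
    using r by (intro continuous_attains_sup continuous_on_subset[OF u_cont]) auto
  then obtain r1 where r1: "r1 \<in> {0..r}" and max: "\<And>y. y \<in> {0..r} \<Longrightarrow> u y \<le> u r1"
    by blast
  have "r1 \<noteq> r"
    using max[of "r - min (d / 2) r"] d(2)[of "min (d / 2) r"] d(1) r by fastforce
  moreover have "r1 \<noteq> 0"
    using max[of r] u_pos[OF r] u_0 r by auto
  ultimately have r1_r: "0 < r1" "r1 < r" using r1 by auto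
  then have r1_R: "r1 \<in> {0<..<R}" using r by auto
  have "u' r1 = 0"
  proof (rule DERIV_local_max[OF u_deriv[OF r1_R]])
    show "0 < min r1 (r - r1)" using r1_r by simp
    show "\<forall>y. \<bar>r1 - y\<bar> < min r1 (r - r1) \<longrightarrow> u y \<le> u r1"
      using max by (auto simp: abs_if)
  qed
  then obtain e where e: "e > 0" "\<And>y. r1 < y \<Longrightarrow> y < r1 + e \<Longrightarrow> u' y > 0"
    using u'_pos_right_of_critical_point[OF r1_R] by blast
  define s where "s = r1 + min (e / 2) (r - r1)"
  have s: "r1 < s" "s < r1 + e" "s \<le> r"
    using e r1_r by (auto simp: s_def)
  obtain \<xi> where \<xi>: "r1 < \<xi>" "\<xi> < s" "u s - u r1 = (s - r1) * u' \<xi>"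
    using MVT2[OF s(1), of u u'] u_deriv r1_r s r by fastforce
  have "u s - u r1 > 0"
    using \<xi> e(2)[of \<xi>] s by simp
  moreover have "u s \<le> u r1"
    using max s r1_r by simp
  ultimately show False by simp
qed

lemma u_mono:
  assumes "x \<in> {0..R}" "y \<in> {0..R}" "x \<le> y"
  shows "u x \<le> u y"
proof (rule DERIV_nonneg_imp_increasing_open[OF \<open>x \<le> y\<close>])
  fix t assume "x < t" "t < y"
  then have "t \<in> {0<..<R}" using assms by auto
  then show "\<exists>d. (u has_real_derivative d) (at t) \<and> 0 \<le> d"
    using u_deriv u'_nonneg by blast
next
  show "continuous_on {x..y} u"
    using continuous_on_subset[OF u_cont] assms by auto
qed

lemma u_nonneg: "r \<in> {0..R} \<Longrightarrow> u r \<ge> 0"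
  using u_mono[of 0 r] u_0 by simp

lemma root_power_R: "(R ^ n) powr (1 / real n) = R"
  using R_pos n_ge_2 by (simp add: powr_realpow[symmetric] powr_powr)

lemma root_mem_interval:
  assumes "z \<in> {0<..<R ^ n}"
  shows "z powr (1 / real n) \<in> {0<..<R}"
  using powr_less_mono2[of "1 / real n" z "R ^ n"] assms n_ge_2 root_power_R by auto

lemma root_mem_Icc:
  assumes "z \<in> {0..R ^ n}"
  shows "z powr (1 / real n) \<in> {0..R}"
  using powr_mono2[of "1 / real n" z "R ^ n"] assms n_ge_2 root_power_R by auto

lemma radial_transform_has_derivative:
  assumes z: "z \<in> {0<..<R ^ n}"
  shows "((\<lambda>z. u (z powr (1 / real n)) powr (p - 1) * z powr (1 - 1 / real n)) has_real_derivative
           (lam + (p - 1) * u (z powr (1 / real n)) powr p) / real n) (at z)"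
proof -
  define q where "q = 1 / real n"
  define r where "r = z powr q"
  have r: "r \<in> {0<..<R}" and z0: "z > 0"
    using root_mem_interval[OF z] z by (simp_all add: r_def q_def)
  have "((\<lambda>z. u (z powr q)) has_real_derivative u' r * (q * z powr (q - 1))) (at z)"
    using DERIV_chain2[OF u_deriv[OF r, unfolded r_def] has_real_derivative_powr[OF z0, of q]]
    unfolding r_def .
  then have "((\<lambda>z. u (z powr q) powr (p - 1) * z powr (1 - q)) has_real_derivative
      (p - 1) * u r powr (p - 1 - 1) * (u' r * (q * z powr (q - 1))) * z powr (1 - q)
      + u r powr (p - 1) * ((1 - q) * z powr (1 - q - 1))) (at z)"
    using u_pos[OF r] z0 unfolding r_def
    by (auto intro!: derivative_eq_intros)
  also have "(p - 1) * u r powr (p - 1 - 1) * (u' r * (q * z powr (q - 1))) * z powr (1 - q)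
      + u r powr (p - 1) * ((1 - q) * z powr (1 - q - 1))
    = q * ((p - 1) * u r powr (p - 2) * u' r) * (z powr (q - 1) * z powr (1 - q))
      + (1 - q) * u r powr (p - 1) * z powr (1 - q - 1)"
    by (simp add: algebra_simps)
  also have "\<dots> = q * (lam - (real n - 1) / r * u r powr (p - 1) + (p - 1) * u r powr p)
      + (1 - q) * u r powr (p - 1) / r"
  proof -
    have "z powr (q - 1) * z powr (1 - q) = 1" "z powr (1 - q - 1) = 1 / r"
      using z0 by (simp_all add: r_def powr_add[symmetric] powr_minus divide_inverse)
    then show ?thesis
      unfolding riccati[OF r] by simp
  qed
  also have "\<dots> = (lam + (p - 1) * u r powr p) / real n"
    using n_ge_2 r by (simp add: q_def field_simps)
  finally show ?thesis
    unfolding q_def r_def .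
qed

lemma convex_on_radial_transform:
  "convex_on {0..R ^ n} (\<lambda>z. u (z powr (1 / real n)) powr (p - 1) * z powr (1 - 1 / real n))"
proof (rule convex_on_Icc_if_convex_on_interior)
  show "convex_on {0<..<R ^ n} (\<lambda>z. u (z powr (1 / real n)) powr (p - 1) * z powr (1 - 1 / real n))"
  proof (rule convex_on_realI)
    fix x y assume xy: "x \<in> {0<..<R ^ n}" "y \<in> {0<..<R ^ n}" "x \<le> y"
    then have "u (x powr (1 / real n)) \<le> u (y powr (1 / real n))"
      using u_mono root_mem_interval[OF xy(1)] root_mem_interval[OF xy(2)]
        powr_mono2[of "1 / real n" x y] by auto
    then have "u (x powr (1 / real n)) powr p \<le> u (y powr (1 / real n)) powr p"
      using u_nonneg root_mem_interval[OF xy(1)] p_gt_1 by (intro powr_mono2) auto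
    then show "(lam + (p - 1) * u (x powr (1 / real n)) powr p) / real n
        \<le> (lam + (p - 1) * u (y powr (1 / real n)) powr p) / real n"
      using p_gt_1 n_ge_2 by (intro divide_right_mono add_left_mono mult_left_mono) auto
  qed (auto intro: radial_transform_has_derivative)
  have "continuous_on {0..R ^ n} (\<lambda>z. u (z powr (1 / real n)))"
    using root_mem_Icc n_ge_2
    by (intro continuous_on_compose2[OF u_cont] continuous_on_powr') (auto intro: continuous_intros)
  then show "continuous_on {0..R ^ n} (\<lambda>z. u (z powr (1 / real n)) powr (p - 1) * z powr (1 - 1 / real n))"
    using root_mem_Icc u_nonneg p_gt_1 n_ge_2
    by (intro continuous_intros continuous_on_powr') auto
qed

end

locale radial_eigenfunction =
  fixes n :: nat and p R \<beta> lam :: real and \<rho> \<rho>' :: "real \<Rightarrow> real"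
  assumes n_ge_2: "n \<ge> 2" and p_gt_1: "p > 1" and R_pos: "R > 0" and \<beta>_pos: "\<beta> > 0"
    and rho_deriv: "\<And>r. r \<in> {0..R} \<Longrightarrow> (\<rho> has_real_derivative \<rho>' r) (at r within {0..R})"
    and rho'_cont: "continuous_on {0..R} \<rho>'"
    and deriv_rho_differentiable: "\<And>r. r \<in> {0<..<R} \<Longrightarrow> deriv \<rho> differentiable (at r)"
    and rho_pos: "\<And>r. r \<in> {0..R} \<Longrightarrow> \<rho> r > 0"
    and rho_antimono: "\<And>x y. x \<in> {0..R} \<Longrightarrow> y \<in> {0..R} \<Longrightarrow> x \<le> y \<Longrightarrow> \<rho> y \<le> \<rho> x"
    and ode: "\<And>r. r \<in> {0<..<R} \<Longrightarrow>
      - (p - 1) * (- \<rho>' r) powr (p - 2) * deriv \<rho>' r + (real n - 1) / r * (- \<rho>' r) powr (p - 1)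
        = lam * \<rho> r powr (p - 1)"
    and rho'_0: "\<rho>' 0 = 0"
    and robin: "- ((- \<rho>' R) powr (p - 1)) + \<beta> * \<rho> R powr (p - 1) = 0"
begin

lemma rho_has_derivative:
  assumes r: "r \<in> {0<..<R}"
  shows "(\<rho> has_real_derivative \<rho>' r) (at r)"
proof -
  have "at r within {0..R} = at r"
    using r by (intro at_within_Icc_at) auto
  then show ?thesis
    using rho_deriv[of r] r by simp
qed

lemma rho'_has_derivative:
  assumes r: "r \<in> {0<..<R}"
  shows "(\<rho>' has_real_derivative deriv \<rho>' r) (at r)"
proof -
  have "deriv \<rho> x = \<rho>' x" if "x \<in> {0<..<R}" for x
    using rho_has_derivative[OF that] by (rule DERIV_imp_deriv)
  moreover obtain D where "(deriv \<rho> has_real_derivative D) (at r)"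
    using deriv_rho_differentiable[OF r] unfolding real_differentiable_def ..
  ultimately have "(\<rho>' has_real_derivative D) (at r)"
    using has_field_derivative_transform_within_open[of "deriv \<rho>" D r "{0<..<R}" \<rho>'] r by simp
  then show ?thesis
    by (simp add: DERIV_imp_deriv)
qed

lemma rho'_nonpos:
  assumes "r \<in> {0..R}"
  shows "\<rho>' r \<le> 0"
  using R_pos assms rho_deriv[OF assms] rho_antimono by (rule has_real_derivative_nonpos_if_antimono_on)

lemma rho'_R_neg: "\<rho>' R < 0"
proof -
  have "(- \<rho>' R) powr (p - 1) = \<beta> * \<rho> R powr (p - 1)"
    using robin by simp
  also have "\<dots> > 0"
    using \<beta>_pos rho_pos[of R] R_pos by simp
  finally have "\<rho>' R \<noteq> 0"
    by auto
  with rho'_nonpos[of R] R_pos show ?thesis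
    by simp
qed

lemma flux_has_derivative:
  assumes r: "r \<in> {0<..<R}" and neg: "\<rho>' r < 0"
  shows "((\<lambda>x. (- \<rho>' x) powr (p - 1)) has_real_derivative
           lam * \<rho> r powr (p - 1) - (real n - 1) / r * (- \<rho>' r) powr (p - 1)) (at r)"
proof -
  have "((\<lambda>x. (- \<rho>' x) powr (p - 1)) has_real_derivative
      (p - 1) * (- \<rho>' r) powr (p - 1 - 1) * (- deriv \<rho>' r)) (at r)"
    using neg by (auto intro!: derivative_eq_intros rho'_has_derivative[OF r])
  also have "(p - 1) * (- \<rho>' r) powr (p - 1 - 1) * (- deriv \<rho>' r)
      = - (p - 1) * (- \<rho>' r) powr (p - 2) * deriv \<rho>' r"
    by (simp add: algebra_simps)
  also have "\<dots> = lam * \<rho> r powr (p - 1) - (real n - 1) / r * (- \<rho>' r) powr (p - 1)"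
    using ode[OF r] by linarith
  finally show ?thesis .
qed

lemma lam_nonzero: "lam \<noteq> 0"
proof
  assume lam: "lam = 0"
  define Z where "Z = {x \<in> {0..R}. \<rho>' x = 0}"
  define a where "a = Sup Z"
  have "closed Z"
    unfolding Z_def by (rule continuous_closed_preimage_constant[OF rho'_cont]) auto
  have "0 \<in> Z"
    using rho'_0 R_pos by (simp add: Z_def)
  have bdd: "bdd_above Z"
    by (rule bdd_aboveI[of _ R]) (simp add: Z_def)
  have "a \<in> Z"
    unfolding a_def using \<open>0 \<in> Z\<close> bdd \<open>closed Z\<close> by (intro closed_contains_Sup) auto
  have a_max: "\<And>x. x \<in> Z \<Longrightarrow> x \<le> a"
    unfolding a_def using bdd by (simp add: cSup_upper)
  have a: "0 \<le> a" "a \<le> R" "\<rho>' a = 0"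
    using \<open>a \<in> Z\<close> a_max[OF \<open>0 \<in> Z\<close>] by (simp_all add: Z_def)
  with rho'_R_neg have "a < R"
    by (cases "a = R") simp_all
  \<comment> \<open>For lam = 0 the flux (- \<rho>') powr (p - 1) is nonincreasing to the right of the last zero of \<rho>'.\<close>
  have "(- \<rho>' R) powr (p - 1) \<le> (- \<rho>' a) powr (p - 1)"
  proof (rule DERIV_nonpos_imp_decreasing_open[OF less_imp_le[OF \<open>a < R\<close>]])
    fix x assume x: "a < x" "x < R"
    have x_R: "x \<in> {0<..<R}"
      using x a(1) by simp
    moreover have "x \<notin> Z"
      using a_max x(1) by (meson not_le)
    ultimately have "\<rho>' x < 0"
      using rho'_nonpos[of x] by (auto simp: Z_def less_le)
    moreover have "lam * \<rho> x powr (p - 1) - (real n - 1) / x * (- \<rho>' x) powr (p - 1) \<le> 0"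
      using x_R n_ge_2 lam by simp
    ultimately show "\<exists>y. ((\<lambda>x. (- \<rho>' x) powr (p - 1)) has_real_derivative y) (at x) \<and> y \<le> 0"
      using flux_has_derivative[OF x_R] by blast
  next
    have "continuous_on {a..R} (\<lambda>x. - \<rho>' x)"
      using a(1) by (intro continuous_intros continuous_on_subset[OF rho'_cont]) auto
    then show "continuous_on {a..R} (\<lambda>x. (- \<rho>' x) powr (p - 1))"
      using a(1) p_gt_1 rho'_nonpos by (intro continuous_on_powr') (auto intro: continuous_intros)
  qed
  then show False
    using \<open>\<rho>' a = 0\<close> rho'_R_neg by simp
qed

lemma rho'_neg:
  assumes r: "r \<in> {0<..R}"
  shows "\<rho>' r < 0"
proof (rule ccontr)
  assume "\<not> \<rho>' r < 0"
  then have "\<rho>' r = 0" and r_R: "r \<in> {0<..<R}"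
    using rho'_nonpos[of r] rho'_R_neg r by (auto simp: less_le)
  then have "lam * \<rho> r powr (p - 1) = 0"
    using ode[OF r_R] by simp
  moreover have "\<rho> r powr (p - 1) > 0"
    using rho_pos[of r] r by simp
  ultimately show False
    using lam_nonzero by simp
qed

lemma rho_continuous: "continuous_on {0..R} \<rho>"
  using rho_deriv by (rule DERIV_continuous_on)

end

sublocale radial_eigenfunction \<subseteq>
  riccati_profile n p lam R "\<lambda>r. - \<rho>' r / \<rho> r" "\<lambda>r. - deriv \<rho>' r / \<rho> r + (- \<rho>' r / \<rho> r)\<^sup>2"
proof
  show "continuous_on {0..R} (\<lambda>r. - \<rho>' r / \<rho> r)"
    using rho_pos by (intro continuous_intros rho'_cont rho_continuous) (metis less_irrefl)
  fix r assume r: "r \<in> {0<..<R}"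
  then have a: "- \<rho>' r > 0" and b: "\<rho> r > 0"
    using rho'_neg rho_pos by auto
  then show "- \<rho>' r / \<rho> r > 0"
    by (simp add: divide_neg_pos)
  show "((\<lambda>r. - \<rho>' r / \<rho> r) has_real_derivative - deriv \<rho>' r / \<rho> r + (- \<rho>' r / \<rho> r)\<^sup>2) (at r)"
    using b by (auto intro!: derivative_eq_intros rho_has_derivative[OF r] rho'_has_derivative[OF r]
        simp: field_simps power2_eq_square)
  show "(p - 1) * (- \<rho>' r / \<rho> r) powr (p - 2) * (- deriv \<rho>' r / \<rho> r + (- \<rho>' r / \<rho> r)\<^sup>2)
      = lam - (real n - 1) / r * (- \<rho>' r / \<rho> r) powr (p - 1) + (p - 1) * (- \<rho>' r / \<rho> r) powr p"
    using ode[OF r] by (intro riccati_identity_powr[OF a b]) simp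
qed (use n_ge_2 p_gt_1 R_pos rho'_0 in auto)

lemma fratio_eq_powr: "fratio p \<rho> \<rho>' r = (- \<rho>' r / \<rho> r) powr (p - 1)"
  unfolding fratio_def minus_divide_left powr_divide ..

theorem theorem4p5:
  fixes n :: nat and p R \<beta> lam :: real and \<rho> \<rho>' :: "real \<Rightarrow> real"
  assumes n: "n \<ge> 2"
    and p: "1 < p"
    and R: "R > 0"
    and \<beta>: "\<beta> > 0"
    and smooth: "\<forall>k. \<forall>r\<in>{0<..<R}. ((deriv ^^ k) \<rho>) differentiable (at r)"
    and C1: "\<forall>r\<in>{0..R}. (\<rho> has_real_derivative \<rho>' r) (at r within {0..R})"
    and C1cont: "continuous_on {0..R} \<rho>'"
    and pos: "\<forall>r\<in>{0..R}. \<rho> r > 0"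
    and decr: "\<forall>x\<in>{0..R}. \<forall>y\<in>{0..R}. x \<le> y \<longrightarrow> \<rho> y \<le> \<rho> x"
    and ode: "\<forall>r\<in>{0<..<R}.
       - (p - 1) * (- \<rho>' r) powr (p - 2) * deriv \<rho>' r
       + (real n - 1) / r * (- \<rho>' r) powr (p - 1) = lam * (\<rho> r) powr (p - 1)"
    and bc0: "\<rho>' 0 = 0"
    and bcR: "- ((- \<rho>' R) powr (p - 1)) + \<beta> * (\<rho> R) powr (p - 1) = 0"
  shows "convex_on {0..R ^ n}
           (\<lambda>z. fratio p \<rho> \<rho>' (z powr (1 / real n)) * z powr (1 - 1 / real n))"
proof -
  have "deriv \<rho> differentiable (at r)" if "r \<in> {0<..<R}" for r
    using smooth[rule_format, of r 1] that by simp
  with assms interpret radial_eigenfunction n p R \<beta> lam \<rho> \<rho>'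
    by unfold_locales auto
  show ?thesis
    using convex_on_radial_transform unfolding fratio_eq_powr .
qed

end
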